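(* Let $p$ be a ProbNetKAT program, $S=\mathcal{S}[\![p]\!]$ and $U$ as in the context. For all $a,b,b'\subseteq\mathsf{Pk}$, \[ \lim_{n\to\infty}\sum_{a'\subseteq\mathsf{Pk}} (S^n)_{(a,b),(a',b')} = (SU)^\infty_{(a,b),(\emptyset,b')}, \] where $(SU)^\infty:=\lim_{n\to\infty}(SU)^n$. In particular the limit on the left exists, and it can be computed exactly in closed form: writing $SU=\begin{bmatrix} I & 0\\ R & Q\end{bmatrix}$ with the absorbing states $(\emptyset,c)$ listed first, $(SU)^\infty=\begin{bmatrix} I & 0\\ (I-Q)^{-1}R & 0\end{bmatrix}$, a matrix with rational entries.
   Context: $\mathsf{Pk}$ is a finite set of packets; $[\varphi]$ is the Iverson bracket. For a ProbNetKAT program $p$ (with rational choice probabilities), $\mathcal{B}[\![p]\!]\in[0,1]^{2^{\mathsf{Pk}}\times 2^{\mathsf{Pk}}}$ is its stochastic matrix semantics ($\mathcal{B}[\![p]\!]_{ab}$ = probability of output set $b$ on input set $a$). The small-step matrix on states $(a,b)\in 2^{\mathsf{Pk}}\times 2^{\mathsf{Pk}}$ is $S_{(a,b),(a',b')}=[b'=b\cup a]\,\mathcal{B}[\![p]\!]_{a,a'}$. A state $(a,b)$ is saturated if whenever $(S^n)_{(a,b),(a',b')}>0$ for some $n\ge0$ we have $b'=b$. $U_{(a,b),(a',b')}=[b'=b][a'=\emptyset]$ if $(a,b)$ is saturated, and $[b'=b][a'=a]$ otherwise. In the block decomposition, $R$ gives transition probabilities from the non-absorbing (transient) states to the absorbing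 states and $Q$ those between transient states. *)

theory Defs
  imports Complex_Main
begin

text \<open>Packets are records assigning a value to each field; both fields and values
range over finite types, so the set of packets Pk (= UNIV) is finite.\<close>

type_synonym ('f, 'v) packet = "'f \<Rightarrow> 'v"

datatype ('f, 'v) pred =
    PDrop
  | PSkip
  | PTest 'f 'v
  | PDisj "('f, 'v) pred" "('f, 'v) pred"
  | PConj "('f, 'v) pred" "('f, 'v) pred"
  | PNeg "('f, 'v) pred"

primrec eval_pred :: "('f, 'v) pred \<Rightarrow> ('f, 'v) packet \<Rightarrow> bool" where
  "eval_pred PDrop \<pi> = False"
| "eval_pred PSkip \<pi> = True"
| "eval_pred (PTest f n) \<pi> = (\<pi> f = n)"
| "eval_pred (PDisj t u) \<pi> = (eval_pred t \<pi> \<or> eval_pred u \<pi>)"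
| "eval_pred (PConj t u) \<pi> = (eval_pred t \<pi> \<and> eval_pred u \<pi>)"
| "eval_pred (PNeg t) \<pi> = (\<not> eval_pred t \<pi>)"

datatype ('f, 'v) prog =
    Pred "('f, 'v) pred"
  | Assign 'f 'v
  | Par "('f, 'v) prog" "('f, 'v) prog"
  | Seq "('f, 'v) prog" "('f, 'v) prog"
  | Choice "('f, 'v) prog" rat "('f, 'v) prog"
  | Star "('f, 'v) prog"

primrec wf_prog :: "('f, 'v) prog \<Rightarrow> bool" where
  "wf_prog (Pred t) = True"
| "wf_prog (Assign f n) = True"
| "wf_prog (Par p q) = (wf_prog p \<and> wf_prog q)"
| "wf_prog (Seq p q) = (wf_prog p \<and> wf_prog q)"
| "wf_prog (Choice p r q) = (0 \<le> r \<and> r \<le> 1 \<and> wf_prog p \<and> wf_prog q)"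
| "wf_prog (Star p) = wf_prog p"

type_synonym 'a mat = "'a \<Rightarrow> 'a \<Rightarrow> real"

definition mat_id :: "'a mat" where
  "mat_id x y = (if x = y then 1 else 0)"

definition mat_mult :: "'a::finite mat \<Rightarrow> 'a mat \<Rightarrow> 'a mat" where
  "mat_mult M N x z = (\<Sum>y\<in>UNIV. M x y * N y z)"

primrec mat_pow :: "'a::finite mat \<Rightarrow> nat \<Rightarrow> 'a mat" where
  "mat_pow M 0 = mat_id"
| "mat_pow M (Suc n) = mat_mult (mat_pow M n) M"

definition par_mat :: "('a::finite) set mat \<Rightarrow> 'a set mat \<Rightarrow> 'a set mat" where
  "par_mat P Q a b = (\<Sum>c\<in>UNIV. \<Sum>d\<in>UNIV. if c \<union> d = b then P a c * Q a d else 0)"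

text \<open>B[[skip]] and the iterates p^(0) = skip, p^(n+1) = skip & p ; p^(n).\<close>

primrec star_approx :: "('a::finite) set mat \<Rightarrow> nat \<Rightarrow> 'a set mat" where
  "star_approx P 0 = mat_id"
| "star_approx P (Suc n) = par_mat mat_id (mat_mult P (star_approx P n))"

primrec bsem :: "('f::finite, 'v::finite) prog \<Rightarrow> ('f, 'v) packet set mat" where
  "bsem (Pred t) a b = (if b = {\<pi> \<in> a. eval_pred t \<pi>} then 1 else 0)"
| "bsem (Assign f n) a b = (if b = (\<lambda>\<pi>. \<pi>(f := n)) ` a then 1 else 0)"
| "bsem (Par p q) a b = par_mat (bsem p) (bsem q) a b"
| "bsem (Seq p q) a b = mat_mult (bsem p) (bsem q) a b"
| "bsem (Choice p r q) a b = real_of_rat r * bsem p a b + (1 - real_of_rat r) * bsem q a b"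
| "bsem (Star p) a b = lim (\<lambda>n. star_approx (bsem p) n a b)"

definition small_step :: "('a::finite) set mat \<Rightarrow> ('a set \<times> 'a set) mat" where
  "small_step B s t = (if snd t = snd s \<union> fst s then B (fst s) (fst t) else 0)"

definition saturated :: "('a::finite set \<times> 'a set) mat \<Rightarrow> 'a set \<times> 'a set \<Rightarrow> bool" where
  "saturated S s \<longleftrightarrow> (\<forall>n t. mat_pow S n s t > 0 \<longrightarrow> snd t = snd s)"

definition U_mat :: "('a::finite set \<times> 'a set) mat \<Rightarrow> ('a set \<times> 'a set) mat" where
  "U_mat S s t =
     (if saturated S s then (if snd t = snd s \<and> fst t = {} then 1 else 0)
      else (if snd t = snd s \<and> fst t = fst s then 1 else 0))"

definition absorbing_st :: "'a set \<times> 'a set \<Rightarrow> bool" where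
  "absorbing_st s \<longleftrightarrow> fst s = {}"

end

theory Submission
  imports Defs "HOL-Analysis.Determinants"
begin

(*
  Strictness of B = bsem p (the empty input yields the empty output) makes every state ({}, c)
  absorbing for S and for SU, and U sends each saturated state (a, c) to ({}, c). From every state,
  S reaches a saturated state (one whose accumulator is maximal among the reachable ones), so SU
  reaches an absorbing state with positive probability. By finiteness, the mass left on transient
  states then decays geometrically, so SU^n converges; its limit solves (I - Q) X = R, which
  identifies it with (I - Q)^-1 R and makes it rational by Cramer's rule. Saturated states never
  change their accumulator, so U does not change the distribution of the final accumulator: the
  output marginals of S^n are those of SU^n. The same computation expresses the iterates of p*
  through S^(n+1), so B[[p*]] is again such a limit, and induction on p shows that every
  well-formed program denotes a rational strict stochastic kernel.
*)

lemma sum_UNIV_prod: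
  fixes f :: "'a::finite \<times> 'b::finite \<Rightarrow> 'c::comm_monoid_add"
  shows "(\<Sum>x\<in>UNIV. f x) = (\<Sum>a\<in>UNIV. \<Sum>b\<in>UNIV. f (a, b))"
  by (simp add: sum.cartesian_product)

lemma sum_UNIV_eq_sum_Compl:
  "(\<And>u. u \<in> A \<Longrightarrow> f u = 0) \<Longrightarrow> (\<Sum>u\<in>UNIV. f u) = (\<Sum>u\<in>-A. f (u::'a::finite))"
  by (rule sum.mono_neutral_right) auto

lemma mat_mult_assoc: "mat_mult (mat_mult A B) C = mat_mult A (mat_mult (B::'a::finite mat) C)"
  by (auto simp: mat_mult_def fun_eq_iff sum_distrib_left sum_distrib_right mult.assoc intro: sum.swap)

lemma mat_mult_id_left [simp]: "mat_mult mat_id A = (A::'a::finite mat)"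
  by (simp add: mat_mult_def mat_id_def fun_eq_iff if_distrib[where f="\<lambda>c. c * _"] cong: if_cong)

lemma mat_mult_id_right [simp]: "mat_mult A mat_id = (A::'a::finite mat)"
  by (simp add: mat_mult_def mat_id_def fun_eq_iff if_distrib[where f="\<lambda>c. _ * c"] cong: if_cong)

lemma mat_pow_Suc_left: "mat_pow M (Suc n) = mat_mult M (mat_pow (M::'a::finite mat) n)"
  by (induction n) (simp_all add: mat_mult_assoc)

lemma mat_pow_add: "mat_pow M (m + n) = mat_mult (mat_pow M m) (mat_pow (M::'a::finite mat) n)"
  by (induction n) (simp_all add: mat_mult_assoc)

definition stochastic :: "'a::finite mat \<Rightarrow> bool" where
  "stochastic M \<longleftrightarrow> (\<forall>s t. 0 \<le> M s t) \<and> (\<forall>s. (\<Sum>t\<in>UNIV. M s t) = 1)"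

lemma stochastic_nonneg: "stochastic M \<Longrightarrow> 0 \<le> M s t"
  by (simp add: stochastic_def)

lemma stochastic_row_sum: "stochastic M \<Longrightarrow> (\<Sum>t\<in>UNIV. M s t) = 1"
  by (simp add: stochastic_def)

lemma stochastic_le_1:
  assumes "stochastic M"
  shows "M s t \<le> 1"
proof -
  have "M s t \<le> (\<Sum>t\<in>UNIV. M s t)"
    by (rule member_le_sum) (auto simp: stochastic_nonneg[OF assms])
  then show ?thesis
    by (simp add: stochastic_row_sum[OF assms])
qed

lemma stochastic_ex_pos:
  assumes "stochastic M"
  shows "\<exists>t. 0 < M s t"
proof (rule ccontr)
  assume "\<nexists>t. 0 < M s t"
  then have "(\<Sum>t\<in>UNIV. M s t) \<le> 0"
    by (simp add: sum_nonpos not_less)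
  then show False
    using stochastic_row_sum[OF assms] by simp
qed

lemma stochastic_mat_id: "stochastic mat_id"
  by (auto simp: stochastic_def mat_id_def)

lemma stochastic_mat_mult: "stochastic A \<Longrightarrow> stochastic B \<Longrightarrow> stochastic (mat_mult A B)"
  unfolding stochastic_def mat_mult_def
  by (auto simp: sum.swap[of _ UNIV UNIV] sum_distrib_left[symmetric] intro!: sum_nonneg)

lemma stochastic_mat_pow: "stochastic M \<Longrightarrow> stochastic (mat_pow M n)"
  by (induction n) (auto intro: stochastic_mat_mult stochastic_mat_id)

lemma stochastic_limit:
  assumes "\<And>n. stochastic (X n)" and "\<And>s t. (\<lambda>n. X n s t) \<longlonglongrightarrow> L s t"
  shows "stochastic L"
proof -
  have "0 \<le> L s t" for s t
    by (rule LIMSEQ_le_const[OF assms(2)]) (auto intro: stochastic_nonneg[OF assms(1)])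
  moreover have "(\<Sum>t\<in>UNIV. L s t) = 1" for s
  proof -
    have "(\<lambda>n. \<Sum>t\<in>UNIV. X n s t) \<longlonglongrightarrow> (\<Sum>t\<in>UNIV. L s t)"
      by (intro tendsto_sum assms(2))
    then show ?thesis
      by (simp add: stochastic_row_sum[OF assms(1)] LIMSEQ_const_iff)
  qed
  ultimately show ?thesis
    by (simp add: stochastic_def)
qed

lemma mat_mult_ge_entry:
  assumes "stochastic A" "stochastic B"
  shows "A x y * B y z \<le> mat_mult A B x z"
  unfolding mat_mult_def
  by (rule member_le_sum) (auto intro: mult_nonneg_nonneg stochastic_nonneg assms)

definition mat_vec :: "'a::finite mat \<Rightarrow> ('a \<Rightarrow> real) \<Rightarrow> 'a \<Rightarrow> real" where
  "mat_vec M v s = (\<Sum>t\<in>UNIV. M s t * v t)"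

lemma mat_vec_mat_mult: "mat_vec (mat_mult A B) v = mat_vec A (mat_vec B v)"
  by (auto simp: mat_vec_def mat_mult_def fun_eq_iff sum_distrib_left sum_distrib_right mult.assoc
      intro: sum.swap)

lemma mat_vec_mat_id [simp]: "mat_vec mat_id v = v"
  by (simp add: mat_vec_def mat_id_def fun_eq_iff if_distrib[where f="\<lambda>c. c * _"] cong: if_cong)

definition mat_support :: "'a mat \<Rightarrow> 'a rel" where
  "mat_support M = {(s, t). 0 < M s t}"

lemma mat_pow_pos_iff_relpow:
  assumes "stochastic M"
  shows "0 < mat_pow M n s t \<longleftrightarrow> (s, t) \<in> mat_support M ^^ n"
proof (induction n arbitrary: t)
  case 0
  then show ?case
    by (simp add: mat_id_def)
next
  case (Suc n)
  have nonneg: "0 \<le> mat_pow M n s y" "0 \<le> M y t" for y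
    using stochastic_nonneg[OF stochastic_mat_pow[OF assms]] stochastic_nonneg[OF assms] by auto
  have "0 < mat_pow M (Suc n) s t \<longleftrightarrow> (\<exists>y. 0 < mat_pow M n s y \<and> 0 < M y t)"
    unfolding mat_pow.simps mat_mult_def using nonneg
    by (simp add: less_le sum_nonneg_eq_0_iff sum_nonneg)
  also have "\<dots> \<longleftrightarrow> (s, t) \<in> mat_support M ^^ Suc n"
    by (auto simp: Suc.IH mat_support_def)
  finally show ?case .
qed

lemma rtrancl_mat_support_iff:
  "stochastic M \<Longrightarrow> (s, t) \<in> (mat_support M)\<^sup>* \<longleftrightarrow> (\<exists>n. 0 < mat_pow M n s t)"
  by (simp add: mat_pow_pos_iff_relpow rtrancl_power)

definition mat_lim :: "'a::finite mat \<Rightarrow> 'a mat" where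
  "mat_lim M s t = lim (\<lambda>n. mat_pow M n s t)"

section \<open>Inverses of rational matrices\<close>

lemma matrix_inv_inverse:
  fixes A :: "'a::field^'n^'n"
  assumes "invertible A"
  shows "matrix_inv A ** A = mat 1" "A ** matrix_inv A = mat 1"
  using someI_ex[OF assms[unfolded invertible_def]] by (simp_all add: matrix_inv_def)

lemma det_Rats: "(\<And>i j. A $ i $ j \<in> \<rat>) \<Longrightarrow> det (A::real^'n^'n) \<in> \<rat>"
  unfolding det_def by (intro Rats_sum Rats_mult Rats_prod) auto

lemma matrix_inv_Rats:
  fixes A :: "real^'n^'n"
  assumes "invertible A" and "\<And>i j. A $ i $ j \<in> \<rat>"
  shows "matrix_inv A $ i $ j \<in> \<rat>"
proof -
  let ?e = "axis j 1 :: real^'n"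
  have "A *v (matrix_inv A *v ?e) = ?e"
    by (simp add: matrix_vector_mul_assoc matrix_inv_inverse[OF assms(1)])
  then have "matrix_inv A *v ?e = (\<chi> k. det (\<chi> r c. if c = k then ?e $ r else A $ r $ c) / det A)"
    using cramer invertible_det_nz assms(1) by blast
  then have "matrix_inv A $ i $ j = det (\<chi> r c. if c = i then ?e $ r else A $ r $ c) / det A"
    by (simp add: matrix_vector_mult_basis column_def vec_eq_iff)
  also have "\<dots> \<in> \<rat>"
    using assms(2) by (intro Rats_divide det_Rats) (auto simp: axis_def)
  finally show ?thesis .
qed

section \<open>Absorbing Markov chains\<close>

locale absorbing_chain =
  fixes M :: "'a::finite mat" and A :: "'a set"
  assumes stochastic: "stochastic M"
    and absorbing: "a \<in> A \<Longrightarrow> M a t = mat_id a t"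
    and reaches_absorbing: "\<exists>a\<in>A. (s, a) \<in> (mat_support M)\<^sup>*"
begin

lemma stochastic_pow: "stochastic (mat_pow M n)"
  by (rule stochastic_mat_pow[OF stochastic])

lemma mat_pow_nonneg: "0 \<le> mat_pow M n s t"
  by (rule stochastic_nonneg[OF stochastic_pow])

lemma mat_pow_absorbing: "a \<in> A \<Longrightarrow> mat_pow M n a t = mat_id a t"
proof (induction n arbitrary: t)
  case (Suc n)
  then show ?case
    by (simp add: mat_mult_def mat_id_def absorbing if_distrib[where f="\<lambda>x. x * _"] cong: if_cong)
qed simp

definition transient_mass :: "nat \<Rightarrow> 'a \<Rightarrow> real" where
  "transient_mass n s = (\<Sum>t\<in>-A. mat_pow M n s t)"

lemma transient_mass_0: "transient_mass 0 s = (if s \<in> A then 0 else 1)"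
  by (auto simp: transient_mass_def mat_id_def)

lemma transient_mass_add: "transient_mass (m + n) s = (\<Sum>t\<in>UNIV. mat_pow M m s t * transient_mass n t)"
  unfolding transient_mass_def mat_pow_add mat_mult_def sum_distrib_left
  by (rule sum.swap)

lemma transient_mass_le_initial: "transient_mass n s \<le> transient_mass 0 s"
proof (cases "s \<in> A")
  case True
  then show ?thesis
    by (simp add: transient_mass_def mat_pow_absorbing mat_id_def)
next
  case False
  have "transient_mass n s \<le> (\<Sum>t\<in>UNIV. mat_pow M n s t)"
    unfolding transient_mass_def by (rule sum_mono2) (auto intro: mat_pow_nonneg)
  then show ?thesis
    using False by (simp add: stochastic_row_sum[OF stochastic_pow] transient_mass_0)
qed

lemma transient_mass_contraction:
  assumes "\<And>t. transient_mass n t \<le> c * transient_mass 0 t"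
  shows "transient_mass (m + n) s \<le> c * transient_mass m s"
proof -
  have "transient_mass (m + n) s \<le> (\<Sum>t\<in>UNIV. mat_pow M m s t * (c * transient_mass 0 t))"
    unfolding transient_mass_add by (intro sum_mono mult_left_mono assms mat_pow_nonneg)
  also have "\<dots> = c * transient_mass m s"
    using transient_mass_add[of m 0 s] by (simp add: sum_distrib_left algebra_simps)
  finally show ?thesis .
qed

lemma transient_mass_nonneg: "0 \<le> transient_mass n s"
  unfolding transient_mass_def by (intro sum_nonneg mat_pow_nonneg)

lemma transient_mass_decreasing: "m \<le> n \<Longrightarrow> transient_mass n s \<le> transient_mass m s"
  using transient_mass_contraction[of "n - m" 1 m] transient_mass_le_initial by simp

lemma transient_mass_eventually_lt_1: "\<exists>n. transient_mass n s < 1"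
proof -
  obtain a n where "a \<in> A" "0 < mat_pow M n s a"
    using reaches_absorbing[of s] rtrancl_mat_support_iff[OF stochastic] by blast
  then have "transient_mass n s + mat_pow M n s a = (\<Sum>t\<in>insert a (-A). mat_pow M n s t)"
    by (simp add: transient_mass_def)
  also have "\<dots> \<le> (\<Sum>t\<in>UNIV. mat_pow M n s t)"
    by (rule sum_mono2) (auto intro: mat_pow_nonneg)
  also have "\<dots> = 1"
    by (rule stochastic_row_sum[OF stochastic_pow])
  finally show ?thesis
    using \<open>0 < mat_pow M n s a\<close> by (intro exI[of _ n]) linarith
qed

lemma transient_mass_uniform_contraction:
  obtains n c where "0 \<le> c" "c < 1" "\<And>t. transient_mass n t \<le> c * transient_mass 0 t"
proof -
  obtain k where k: "transient_mass (k t) t < 1" for t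
    using transient_mass_eventually_lt_1 by metis
  define n where "n = Max (range k)"
  define c where "c = Max (range (transient_mass n))"
  have lt_1: "transient_mass n t < 1" for t
    using transient_mass_decreasing[of "k t" n t] k[of t] by (simp add: n_def)
  have "0 \<le> c"
    using transient_mass_nonneg by (auto simp: c_def Max_ge_iff)
  moreover have "c < 1"
    using lt_1 by (simp add: c_def)
  moreover have "transient_mass n t \<le> c * transient_mass 0 t" for t
    using transient_mass_le_initial[of n t] by (auto simp: c_def transient_mass_0)
  ultimately show ?thesis
    using that by blast
qed

lemma transient_mass_tendsto_0: "(\<lambda>n. transient_mass n s) \<longlonglongrightarrow> 0"
proof -
  obtain K c where c: "0 \<le> c" "c < 1" and K: "\<And>t. transient_mass K t \<le> c * transient_mass 0 t"
    using transient_mass_uniform_contraction by blast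
  have geometric: "transient_mass (j * K) s \<le> c ^ j" for j
  proof (induction j)
    case 0
    then show ?case
      by (simp add: transient_mass_0)
  next
    case (Suc j)
    have "transient_mass (j * K + K) s \<le> c * transient_mass (j * K) s"
      by (rule transient_mass_contraction[OF K])
    also have "\<dots> \<le> c * c ^ j"
      using Suc c(1) by (rule mult_left_mono)
    finally show ?case
      by (simp add: add.commute)
  qed
  have "decseq (\<lambda>n. transient_mass n s)"
    by (simp add: decseq_def transient_mass_decreasing)
  then obtain L where L: "(\<lambda>n. transient_mass n s) \<longlonglongrightarrow> L" "\<And>n. L \<le> transient_mass n s"
    using decseq_convergent[of _ 0] transient_mass_nonneg by metis
  have "(\<lambda>j. c ^ j) \<longlonglongrightarrow> 0"
    using c by (intro LIMSEQ_power_zero) simp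
  then have "L \<le> 0"
    using L(2) geometric order_trans by (intro LIMSEQ_le_const) blast+
  moreover have "0 \<le> L"
    using transient_mass_nonneg by (intro LIMSEQ_le_const[OF L(1)]) auto
  ultimately show ?thesis
    using L(1) by simp
qed

lemma mat_pow_transient_tendsto_0:
  assumes "t \<notin> A"
  shows "(\<lambda>n. mat_pow M n s t) \<longlonglongrightarrow> 0"
proof (rule real_tendsto_sandwich[OF _ _ tendsto_const transient_mass_tendsto_0])
  show "\<forall>\<^sub>F n in sequentially. 0 \<le> mat_pow M n s t"
    by (simp add: mat_pow_nonneg)
  show "\<forall>\<^sub>F n in sequentially. mat_pow M n s t \<le> transient_mass n s"
    unfolding transient_mass_def using assms
    by (intro always_eventually allI member_le_sum) (auto simp: mat_pow_nonneg)
qed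

lemma mat_pow_tendsto: "(\<lambda>n. mat_pow M n s t) \<longlonglongrightarrow> mat_lim M s t"
proof -
  have "convergent (\<lambda>n. mat_pow M n s t)"
  proof (cases "t \<in> A")
    case True
    have "mat_pow M n s t \<le> mat_pow M (Suc n) s t" for n
      using mat_mult_ge_entry[OF stochastic_pow stochastic, of n s t t] True
      by (simp add: absorbing mat_id_def)
    then have "incseq (\<lambda>n. mat_pow M n s t)"
      by (rule incseq_SucI)
    then show ?thesis
      using incseq_convergent[of _ 1] stochastic_le_1[OF stochastic_pow] by (metis convergent_def)
  next
    case False
    then show ?thesis
      using mat_pow_transient_tendsto_0 by (auto simp: convergent_def)
  qed
  then show ?thesis
    by (simp add: mat_lim_def convergent_LIMSEQ_iff)
qed

lemma mat_lim_transient: "t \<notin> A \<Longrightarrow> mat_lim M s t = 0"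
  using LIMSEQ_unique[OF mat_pow_tendsto mat_pow_transient_tendsto_0] by blast

lemma mat_lim_absorbing: "a \<in> A \<Longrightarrow> mat_lim M a t = mat_id a t"
  by (simp add: mat_lim_def mat_pow_absorbing)

lemma mat_lim_step: "mat_lim M s t = (\<Sum>u\<in>UNIV. M s u * mat_lim M u t)"
proof -
  have "(\<lambda>n. mat_pow M (Suc n) s t) \<longlonglongrightarrow> (\<Sum>u\<in>UNIV. M s u * mat_lim M u t)"
    unfolding mat_pow_Suc_left mat_mult_def by (intro tendsto_intros mat_pow_tendsto)
  then show ?thesis
    using LIMSEQ_unique LIMSEQ_Suc[OF mat_pow_tendsto] by blast
qed

lemma stochastic_mat_lim: "stochastic (mat_lim M)"
  by (rule stochastic_limit[OF stochastic_pow mat_pow_tendsto])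

lemma harmonic_vanishing_on_absorbing:
  assumes harmonic: "mat_vec M f = f" and vanishing: "\<And>a. a \<in> A \<Longrightarrow> f a = 0"
  shows "f s = 0"
proof -
  define B where "B = (\<Sum>u\<in>UNIV. \<bar>f u\<bar>)"
  have "mat_vec (mat_pow M n) f = f" for n
    by (induction n) (simp_all add: mat_vec_mat_mult harmonic)
  then have "\<bar>f s\<bar> = \<bar>\<Sum>u\<in>UNIV. mat_pow M n s u * f u\<bar>" for n
    by (metis mat_vec_def)
  also have "\<dots> n \<le> (\<Sum>u\<in>UNIV. mat_pow M n s u * \<bar>f u\<bar>)" for n
    by (rule order_trans[OF sum_abs]) (simp add: abs_mult mat_pow_nonneg)
  also have "\<dots> n = (\<Sum>u\<in>-A. mat_pow M n s u * \<bar>f u\<bar>)" for n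
    by (rule sum.mono_neutral_right) (auto simp: vanishing)
  also have "\<dots> n \<le> (\<Sum>u\<in>-A. mat_pow M n s u * B)" for n
    unfolding B_def by (intro sum_mono mult_left_mono member_le_sum) (auto simp: mat_pow_nonneg)
  also have "\<dots> n = B * transient_mass n s" for n
    by (simp add: transient_mass_def sum_distrib_left mult.commute)
  finally have "\<bar>f s\<bar> \<le> B * transient_mass n s" for n .
  moreover have "(\<lambda>n. B * transient_mass n s) \<longlonglongrightarrow> 0"
    using tendsto_mult_right_zero[OF transient_mass_tendsto_0] .
  ultimately have "\<bar>f s\<bar> \<le> 0"
    using LIMSEQ_le_const by blast
  then show ?thesis
    by simp
qed

text \<open>The transient block \<open>Q\<close> of \<open>M\<close> is padded with zeros, so \<open>I_minus_Q\<close> acts as the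
  identity on absorbing states.\<close>

definition I_minus_Q :: "real^'a^'a" where
  "I_minus_Q = (\<chi> s u. mat_id s u - (if s \<notin> A \<and> u \<notin> A then M s u else 0))"

lemma I_minus_Q_mult_vec:
  "(I_minus_Q *v x) $ s = x $ s - (if s \<in> A then 0 else (\<Sum>u\<in>-A. M s u * x $ u))"
proof -
  have "(I_minus_Q *v x) $ s
      = (\<Sum>u\<in>UNIV. mat_id s u * x $ u) - (\<Sum>u\<in>UNIV. (if s \<notin> A \<and> u \<notin> A then M s u else 0) * x $ u)"
    by (simp add: I_minus_Q_def matrix_vector_mult_def left_diff_distrib sum_subtractf)
  then show ?thesis
    by (simp add: mat_id_def if_distrib[where f="\<lambda>c. c * _"] sum.If_cases Collect_neg_eq
        cong: if_cong)
qed

lemma invertible_I_minus_Q: "invertible I_minus_Q"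
proof -
  have "x = 0" if kernel: "I_minus_Q *v x = 0" for x
  proof -
    have row: "x $ s = (if s \<in> A then 0 else (\<Sum>u\<in>-A. M s u * x $ u))" for s
      using arg_cong[OF kernel, of "\<lambda>v. v $ s"] by (simp add: I_minus_Q_mult_vec)
    have vanishing: "x $ a = 0" if "a \<in> A" for a
      using row[of a] that by simp
    have "mat_vec M (\<lambda>u. x $ u) s = x $ s" for s
    proof (cases "s \<in> A")
      case True
      then show ?thesis
        by (simp add: mat_vec_def absorbing mat_id_def if_distrib[where f="\<lambda>c. c * _"] cong: if_cong)
    next
      case False
      have "mat_vec M (\<lambda>u. x $ u) s = (\<Sum>u\<in>-A. M s u * x $ u)"
        unfolding mat_vec_def by (rule sum_UNIV_eq_sum_Compl) (simp add: vanishing)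
      then show ?thesis
        using row[of s] False by simp
    qed
    then have "x $ s = 0" for s
      using harmonic_vanishing_on_absorbing[of "\<lambda>u. x $ u"] vanishing by blast
    then show ?thesis
      by (simp add: vec_eq_iff)
  qed
  then show ?thesis
    by (simp add: invertible_left_inverse matrix_left_invertible_ker)
qed

definition fundamental :: "'a mat" where
  "fundamental s u = matrix_inv I_minus_Q $ s $ u"

lemma fundamental_left_inverse:
  assumes "t \<notin> A"
  shows "(\<Sum>u\<in>-A. fundamental s u * (mat_id u t - M u t)) = mat_id s t"
proof -
  have "mat_id s t = (\<Sum>u\<in>UNIV. fundamental s u * I_minus_Q $ u $ t)"
    using arg_cong[OF matrix_inv_inverse(1)[OF invertible_I_minus_Q], of "\<lambda>X. X $ s $ t"]
    by (simp add: matrix_matrix_mult_def mat_def mat_id_def fundamental_def)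
  also have "\<dots> = (\<Sum>u\<in>-A. fundamental s u * I_minus_Q $ u $ t)"
    by (rule sum_UNIV_eq_sum_Compl) (use assms in \<open>auto simp: I_minus_Q_def mat_id_def\<close>)
  also have "\<dots> = (\<Sum>u\<in>-A. fundamental s u * (mat_id u t - M u t))"
    by (rule sum.cong) (use assms in \<open>auto simp: I_minus_Q_def\<close>)
  finally show ?thesis ..
qed

lemma fundamental_right_inverse:
  assumes "s \<notin> A"
  shows "(\<Sum>u\<in>-A. (mat_id s u - M s u) * fundamental u t) = mat_id s t"
proof -
  have "mat_id s t = (\<Sum>u\<in>UNIV. I_minus_Q $ s $ u * fundamental u t)"
    using arg_cong[OF matrix_inv_inverse(2)[OF invertible_I_minus_Q], of "\<lambda>X. X $ s $ t"]
    by (simp add: matrix_matrix_mult_def mat_def mat_id_def fundamental_def)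
  also have "\<dots> = (\<Sum>u\<in>-A. I_minus_Q $ s $ u * fundamental u t)"
    by (rule sum_UNIV_eq_sum_Compl) (use assms in \<open>auto simp: I_minus_Q_def mat_id_def\<close>)
  also have "\<dots> = (\<Sum>u\<in>-A. (mat_id s u - M s u) * fundamental u t)"
    by (rule sum.cong) (use assms in \<open>auto simp: I_minus_Q_def\<close>)
  finally show ?thesis ..
qed

lemma mat_lim_eq_fundamental:
  assumes "s \<notin> A" "t \<in> A"
  shows "mat_lim M s t = (\<Sum>u\<in>-A. fundamental s u * M u t)"
proof -
  define y where "y = (\<chi> u. mat_lim M u t - mat_id u t)"
  define r where "r = (\<chi> u. if u \<in> A then 0 else M u t)"
  have y_absorbing: "y $ u = 0" if "u \<in> A" for u
    using that by (simp add: y_def mat_lim_absorbing)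
  have "y $ u - (\<Sum>v\<in>-A. M u v * y $ v) = M u t" if "u \<notin> A" for u
  proof -
    have "y $ u = (\<Sum>v\<in>UNIV. M u v * y $ v + M u v * mat_id v t)"
      using that assms(2) mat_lim_step[of u t] by (auto simp: y_def mat_id_def algebra_simps)
    also have "\<dots> = (\<Sum>v\<in>-A. M u v * y $ v) + M u t"
      by (simp add: sum.distrib sum_UNIV_eq_sum_Compl[of A] y_absorbing mat_id_def
          if_distrib[where f="\<lambda>c. _ * c"] cong: if_cong)
    finally show ?thesis
      by simp
  qed
  then have "I_minus_Q *v y = r"
    by (simp add: vec_eq_iff I_minus_Q_mult_vec r_def y_absorbing)
  then have "y = matrix_inv I_minus_Q *v r"
    by (metis matrix_vector_mul_assoc matrix_inv_inverse(1)[OF invertible_I_minus_Q]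
        matrix_vector_mul_lid)
  then have "y $ s = (\<Sum>u\<in>UNIV. fundamental s u * r $ u)"
    by (simp add: matrix_vector_mult_def fundamental_def)
  moreover have "s \<noteq> t"
    using assms by blast
  ultimately have "mat_lim M s t = (\<Sum>u\<in>UNIV. fundamental s u * r $ u)"
    by (simp add: y_def mat_id_def)
  also have "\<dots> = (\<Sum>u\<in>-A. fundamental s u * r $ u)"
    by (rule sum_UNIV_eq_sum_Compl) (simp add: r_def)
  also have "\<dots> = (\<Sum>u\<in>-A. fundamental s u * M u t)"
    by (rule sum.cong) (auto simp: r_def)
  finally show ?thesis .
qed

lemma mat_lim_Rats:
  assumes "\<And>s t. M s t \<in> \<rat>"
  shows "mat_lim M s t \<in> \<rat>"
proof -
  have "I_minus_Q $ i $ j \<in> \<rat>" for i j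
    using assms by (simp add: I_minus_Q_def mat_id_def)
  then have "fundamental s u \<in> \<rat>" for s u
    unfolding fundamental_def by (rule matrix_inv_Rats[OF invertible_I_minus_Q])
  then show ?thesis
    using assms
    by (cases "s \<in> A"; cases "t \<in> A")
      (simp_all add: mat_lim_transient mat_lim_absorbing mat_lim_eq_fundamental mat_id_def
        Rats_sum Rats_mult)
qed

end

section \<open>The small-step chain of a strict kernel\<close>

definition collapse :: "('a::finite set \<times> 'a set) mat \<Rightarrow> 'a set \<times> 'a set \<Rightarrow> 'a set \<times> 'a set" where
  "collapse M s = (if saturated M s then ({}, snd s) else s)"

lemma U_mat_collapse: "U_mat M s t = mat_id (collapse M s) t"
  by (cases s; cases t) (auto simp: U_mat_def collapse_def mat_id_def)

lemma stochastic_U_mat: "stochastic (U_mat M)"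
  by (simp add: U_mat_collapse stochastic_def mat_id_def)

lemma saturated_iff_rtrancl:
  "stochastic M \<Longrightarrow> saturated M s \<longleftrightarrow> (\<forall>t. (s, t) \<in> (mat_support M)\<^sup>* \<longrightarrow> snd t = snd s)"
  by (auto simp: saturated_def rtrancl_mat_support_iff)

lemma mat_vec_snd_indicator:
  "mat_vec M (\<lambda>t. if snd t = b then 1 else 0) s = (\<Sum>a\<in>UNIV. M s (a, b))"
  by (simp add: mat_vec_def sum_UNIV_prod if_distrib[where f="\<lambda>c. _ * c"] cong: if_cong)

lemma mat_vec_par_mat:
  "mat_vec (par_mat P Q) h a = (\<Sum>c\<in>UNIV. \<Sum>d\<in>UNIV. P a c * Q a d * h (c \<union> d))"
proof -
  have "mat_vec (par_mat P Q) h a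
      = (\<Sum>b\<in>UNIV. \<Sum>c\<in>UNIV. \<Sum>d\<in>UNIV. if c \<union> d = b then P a c * Q a d * h b else 0)"
    by (simp add: mat_vec_def par_mat_def sum_distrib_right if_distrib[where f="\<lambda>x. x * _"] cong: if_cong)
  also have "\<dots> = (\<Sum>c\<in>UNIV. \<Sum>d\<in>UNIV. \<Sum>b\<in>UNIV. if c \<union> d = b then P a c * Q a d * h b else 0)"
    by (rule trans[OF sum.swap sum.cong[OF refl sum.swap]])
  finally show ?thesis
    by simp
qed

lemma mat_vec_par_mat_id_left: "mat_vec (par_mat mat_id Q) h a = mat_vec Q (\<lambda>d. h (a \<union> d)) a"
  unfolding mat_vec_par_mat
  by (subst sum.swap) (simp add: mat_vec_def mat_id_def if_distrib[where f="\<lambda>x. x * _"] cong: if_cong)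

locale strict_kernel =
  fixes B :: "'a::finite set mat"
  assumes stochastic_kernel: "stochastic B"
    and empty_to_empty: "B {} {} = 1"
begin

abbreviation S :: "('a set \<times> 'a set) mat" where
  "S \<equiv> small_step B"

abbreviation SU :: "('a set \<times> 'a set) mat" where
  "SU \<equiv> mat_mult S (U_mat S)"

lemma kernel_empty_row: "B {} b = mat_id {} b"
proof -
  have "B {} {} + (\<Sum>b\<in>UNIV - {{}}. B {} b) = 1"
    using stochastic_row_sum[OF stochastic_kernel, of "{}"] by (simp add: sum.remove)
  then have "\<forall>b\<in>UNIV - {{}}. B {} b = 0"
    using stochastic_nonneg[OF stochastic_kernel] empty_to_empty
    by (simp add: sum_nonneg_eq_0_iff)
  then show ?thesis
    using empty_to_empty by (auto simp: mat_id_def)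
qed

lemma stochastic_S: "stochastic S"
proof -
  have "(\<Sum>t\<in>UNIV. S s t) = 1" for s
    using stochastic_row_sum[OF stochastic_kernel]
    by (simp add: small_step_def sum_UNIV_prod)
  then show ?thesis
    using stochastic_nonneg[OF stochastic_kernel] by (simp add: stochastic_def small_step_def)
qed

lemma S_empty: "S ({}, c) t = mat_id ({}, c) t"
  by (cases t) (auto simp: small_step_def kernel_empty_row mat_id_def)

lemma snd_mono_rtrancl: "(s, t) \<in> (mat_support S)\<^sup>* \<Longrightarrow> snd s \<subseteq> snd t"
  by (induction rule: rtrancl_induct) (auto simp: mat_support_def small_step_def split: if_splits)

lemma saturated_rtrancl:
  assumes "saturated S s" and "(s, t) \<in> (mat_support S)\<^sup>*"
  shows "saturated S t"
proof -
  have "snd u = snd t" if "(t, u) \<in> (mat_support S)\<^sup>*" for u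
  proof -
    have "(s, u) \<in> (mat_support S)\<^sup>*"
      using assms(2) that by (rule rtrancl_trans)
    then show ?thesis
      using assms unfolding saturated_iff_rtrancl[OF stochastic_S] by blast
  qed
  then show ?thesis
    unfolding saturated_iff_rtrancl[OF stochastic_S] by blast
qed

lemma saturated_empty: "saturated S ({}, c)"
proof -
  have "t = ({}, c)" if "(({}, c), t) \<in> (mat_support S)\<^sup>*" for t
    using that by (induction rule: rtrancl_induct)
      (auto simp: mat_support_def S_empty mat_id_def split: if_splits)
  then show ?thesis
    unfolding saturated_iff_rtrancl[OF stochastic_S] by fastforce
qed

lemma rtrancl_saturated: "\<exists>t. (s, t) \<in> (mat_support S)\<^sup>* \<and> saturated S t"
proof -
  define R where "R = {t. (s, t) \<in> (mat_support S)\<^sup>*}"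
  have "s \<in> R"
    by (simp add: R_def)
  then obtain c where "c \<in> snd ` R" and maximal: "\<forall>d\<in>snd ` R. c \<subseteq> d \<longrightarrow> c = d"
    using finite_has_maximal[OF finite, of "snd ` R"] by blast
  then obtain t where t: "t \<in> R" "snd t = c"
    by blast
  have "snd u = snd t" if "(t, u) \<in> (mat_support S)\<^sup>*" for u
  proof -
    have "u \<in> R"
      using t(1) that unfolding R_def by (blast intro: rtrancl_trans)
    then have "c \<subseteq> snd u \<longrightarrow> c = snd u"
      using maximal by blast
    then show ?thesis
      using t(2) snd_mono_rtrancl[OF that] by simp
  qed
  then have "saturated S t"
    unfolding saturated_iff_rtrancl[OF stochastic_S] by blast
  with t(1) show ?thesis
    unfolding R_def by blast
qed

lemma stochastic_SU: "stochastic SU"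
  by (rule stochastic_mat_mult[OF stochastic_S stochastic_U_mat[of S]])

lemma SU_absorbing: "absorbing_st a \<Longrightarrow> SU a t = mat_id a t"
  by (cases a) (simp add: absorbing_st_def mat_mult_def S_empty mat_id_def U_mat_collapse collapse_def
      saturated_empty if_distrib[where f="\<lambda>c. c * _"] cong: if_cong)

lemma SU_step_saturated:
  assumes "0 < S s y" "saturated S y"
  shows "(s, ({}, snd y)) \<in> mat_support SU"
  using mat_mult_ge_entry[OF stochastic_S stochastic_U_mat[of S], of s y "({}, snd y)"] assms
  by (simp add: mat_support_def U_mat_collapse collapse_def mat_id_def)

lemma SU_step_unsaturated:
  assumes "0 < S s y" "\<not> saturated S y"
  shows "(s, y) \<in> mat_support SU"
  using mat_mult_ge_entry[OF stochastic_S stochastic_U_mat[of S], of s y y] assms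
  by (simp add: mat_support_def U_mat_collapse collapse_def mat_id_def)

lemma SU_reaches_absorbing: "\<exists>a. absorbing_st a \<and> (s, a) \<in> (mat_support SU)\<^sup>*"
proof -
  obtain t where "(s, t) \<in> (mat_support S)\<^sup>*" "saturated S t"
    using rtrancl_saturated by blast
  then show ?thesis
  proof (induction rule: converse_rtrancl_induct)
    txt \<open>Along an \<open>S\<close>-path, \<open>SU\<close> follows the path until it would enter a saturated state
      and jumps to an absorbing state instead.\<close>
    case base
    obtain y where "0 < S t y"
      using stochastic_ex_pos[OF stochastic_S] by blast
    then have "(t, y) \<in> (mat_support S)\<^sup>*"
      by (auto simp: mat_support_def)
    then have "saturated S y"
      using base saturated_rtrancl by blast
    then have "(t, ({}, snd y)) \<in> mat_support SU"
      using SU_step_saturated \<open>0 < S t y\<close> by blast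
    then show ?case
      by (auto simp: absorbing_st_def)
  next
    case (step s y)
    show ?case
    proof (cases "saturated S y")
      case True
      then have "(s, ({}, snd y)) \<in> mat_support SU"
        using SU_step_saturated step(1) by (auto simp: mat_support_def)
      then show ?thesis
        by (auto simp: absorbing_st_def)
    next
      case False
      then have "(s, y) \<in> mat_support SU"
        using SU_step_unsaturated step(1) by (simp add: mat_support_def)
      then show ?thesis
        using step.IH[OF step.prems] by (meson converse_rtrancl_into_rtrancl)
    qed
  qed
qed

sublocale absorbing_chain SU "{s. absorbing_st s}"
proof
  show "\<exists>a\<in>{s. absorbing_st s}. (s, a) \<in> (mat_support SU)\<^sup>*" for s
    using SU_reaches_absorbing by blast
next
  show "stochastic SU" by (rule stochastic_SU)
next
  show "a \<in> {s. absorbing_st s} \<Longrightarrow> SU a t = mat_id a t" for a t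
    by (simp add: SU_absorbing)
qed

lemma S_pow_saturated_snd:
  assumes "saturated S y"
  shows "mat_vec (mat_pow S m) (\<lambda>t. g (snd t)) y = g (snd y)"
proof -
  have "mat_vec (mat_pow S m) (\<lambda>t. g (snd t)) y = (\<Sum>t\<in>UNIV. mat_pow S m y t * g (snd y))"
    unfolding mat_vec_def
  proof (rule sum.cong)
    fix t
    have "snd t = snd y" if "0 < mat_pow S m y t"
      using assms that unfolding saturated_def by blast
    then show "mat_pow S m y t * g (snd t) = mat_pow S m y t * g (snd y)"
      using stochastic_nonneg[OF stochastic_mat_pow[OF stochastic_S], of m y t]
      by (cases "mat_pow S m y t = 0") auto
  qed simp
  also have "\<dots> = g (snd y)"
    by (simp add: stochastic_row_sum[OF stochastic_mat_pow[OF stochastic_S]] flip: sum_distrib_right)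
  finally show ?thesis .
qed

lemma U_mat_fixes_S_pow_snd:
  "mat_vec (U_mat S) (mat_vec (mat_pow S m) (\<lambda>t. g (snd t))) = mat_vec (mat_pow S m) (\<lambda>t. g (snd t))"
proof
  fix y
  have "mat_vec (U_mat S) (mat_vec (mat_pow S m) (\<lambda>t. g (snd t))) y
      = mat_vec (mat_pow S m) (\<lambda>t. g (snd t)) (collapse S y)"
    by (simp add: mat_vec_def U_mat_collapse mat_id_def if_distrib[where f="\<lambda>c. c * _"] cong: if_cong)
  also have "\<dots> = mat_vec (mat_pow S m) (\<lambda>t. g (snd t)) y"
    using S_pow_saturated_snd[OF saturated_empty] S_pow_saturated_snd[of y]
    by (simp add: collapse_def)
  finally show "mat_vec (U_mat S) (mat_vec (mat_pow S m) (\<lambda>t. g (snd t))) y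
      = mat_vec (mat_pow S m) (\<lambda>t. g (snd t)) y" .
qed

lemma SU_pow_S_pow_snd:
  "mat_vec (mat_pow SU n) (mat_vec (mat_pow S m) (\<lambda>t. g (snd t)))
     = mat_vec (mat_pow S (n + m)) (\<lambda>t. g (snd t))"
proof (induction n arbitrary: m)
  case (Suc n)
  have "mat_vec SU (mat_vec (mat_pow S m) (\<lambda>t. g (snd t))) = mat_vec (mat_pow S (Suc m)) (\<lambda>t. g (snd t))"
    by (simp add: mat_vec_mat_mult U_mat_fixes_S_pow_snd mat_pow_Suc_left del: mat_pow.simps)
  then show ?case
    using Suc.IH[of "Suc m"] by (simp add: mat_vec_mat_mult)
qed simp

lemma mat_lim_SU_snd:
  "(\<Sum>t\<in>UNIV. mat_lim SU s t * g (snd t)) = (\<Sum>c\<in>UNIV. mat_lim SU s ({}, c) * g c)"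
proof -
  have "(\<Sum>t\<in>UNIV. mat_lim SU s t * g (snd t)) = (\<Sum>a\<in>UNIV. \<Sum>c\<in>UNIV. mat_lim SU s (a, c) * g c)"
    by (simp add: sum_UNIV_prod)
  also have "\<dots> = (\<Sum>c\<in>UNIV. mat_lim SU s ({}, c) * g c)"
    by (subst sum.remove[of UNIV "{}"]) (auto simp: mat_lim_transient absorbing_st_def)
  finally show ?thesis .
qed

lemma S_pow_snd_tendsto:
  "(\<lambda>n. mat_vec (mat_pow S n) (\<lambda>t. g (snd t)) s) \<longlonglongrightarrow> (\<Sum>c\<in>UNIV. mat_lim SU s ({}, c) * g c)"
proof -
  have "(\<lambda>n. mat_vec (mat_pow SU n) (\<lambda>t. g (snd t)) s) \<longlonglongrightarrow> (\<Sum>t\<in>UNIV. mat_lim SU s t * g (snd t))"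
    unfolding mat_vec_def by (intro tendsto_intros mat_pow_tendsto)
  then show ?thesis
    using SU_pow_S_pow_snd[of _ 0 g] by (simp add: mat_lim_SU_snd)
qed

lemma marginal_tendsto:
  "(\<lambda>n. \<Sum>a'\<in>UNIV. mat_pow S n (a, b) (a', b')) \<longlonglongrightarrow> mat_lim SU (a, b) ({}, b')"
  using S_pow_snd_tendsto[of "\<lambda>c. if c = b' then 1 else 0" "(a, b)"]
  by (simp add: mat_vec_snd_indicator if_distrib[where f="\<lambda>c. _ * c"] cong: if_cong)

lemma S_mat_vec: "mat_vec S w (a, c) = (\<Sum>a'\<in>UNIV. B a a' * w (a', c \<union> a))"
  by (simp add: mat_vec_def sum_UNIV_prod small_step_def if_distrib[where f="\<lambda>x. x * _"] cong: if_cong)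

lemma S_pow_Suc_snd:
  "mat_vec (mat_pow S (Suc n)) (\<lambda>t. g (snd t)) (a, c) = mat_vec (star_approx B n) (\<lambda>d. g (c \<union> d)) a"
proof (induction n arbitrary: a c)
  case 0
  show ?case
    by (simp add: S_mat_vec stochastic_row_sum[OF stochastic_kernel] flip: sum_distrib_right)
next
  case (Suc n)
  have "mat_vec (mat_pow S (Suc (Suc n))) (\<lambda>t. g (snd t)) (a, c)
      = (\<Sum>a'\<in>UNIV. B a a' * mat_vec (star_approx B n) (\<lambda>d. g (c \<union> a \<union> d)) a')"
    by (simp add: mat_pow_Suc_left[of S "Suc n"] mat_vec_mat_mult S_mat_vec Suc.IH del: mat_pow.simps)
  also have "\<dots> = mat_vec (star_approx B (Suc n)) (\<lambda>d. g (c \<union> d)) a"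
    unfolding star_approx.simps mat_vec_par_mat_id_left mat_vec_mat_mult
    by (simp add: mat_vec_def Un_assoc)
  finally show ?case .
qed

lemma star_approx_tendsto: "(\<lambda>n. star_approx B n a b) \<longlonglongrightarrow> mat_lim SU (a, {}) ({}, b)"
proof -
  have "star_approx B n a b = (\<Sum>a'\<in>UNIV. mat_pow S (Suc n) (a, {}) (a', b))" for n
    using S_pow_Suc_snd[of n "\<lambda>d. if d = b then 1 else 0" a "{}"]
    by (simp add: mat_vec_snd_indicator mat_vec_def if_distrib[where f="\<lambda>c. _ * c"] cong: if_cong)
  then show ?thesis
    using LIMSEQ_Suc[OF marginal_tendsto] by simp
qed

lemma lim_star_approx: "lim (\<lambda>n. star_approx B n a b) = mat_lim SU (a, {}) ({}, b)"
  by (rule limI[OF star_approx_tendsto])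

lemma strict_kernel_star: "strict_kernel (\<lambda>a b. mat_lim SU (a, {}) ({}, b))"
proof
  have "(\<Sum>b\<in>UNIV. mat_lim SU (a, {}) ({}, b)) = 1" for a
    using mat_lim_SU_snd[of "(a, {})" "\<lambda>_. 1"] stochastic_row_sum[OF stochastic_mat_lim] by simp
  then show "stochastic (\<lambda>a b. mat_lim SU (a, {}) ({}, b))"
    using stochastic_nonneg[OF stochastic_mat_lim] by (simp add: stochastic_def)
  show "mat_lim SU ({}, {}) ({}, {}) = 1"
    by (simp add: mat_lim_absorbing absorbing_st_def mat_id_def)
qed

lemma SU_Rats:
  assumes "\<And>a b. B a b \<in> \<rat>"
  shows "SU s t \<in> \<rat>"
proof -
  have "S s y \<in> \<rat>" "U_mat S y t \<in> \<rat>" for y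
    by (simp_all add: small_step_def U_mat_def assms)
  then show ?thesis
    unfolding mat_mult_def by (intro Rats_sum Rats_mult)
qed

end

section \<open>Well-formed programs denote strict kernels\<close>

lemma strict_kernel_deterministic:
  "f {} = {} \<Longrightarrow> strict_kernel (\<lambda>a b. if b = f a then 1 else 0)"
  by unfold_locales (simp_all add: stochastic_def)

lemma strict_kernel_par_mat:
  assumes "strict_kernel P" "strict_kernel Q"
  shows "strict_kernel (par_mat P Q)"
proof
  have "(\<Sum>b\<in>UNIV. par_mat P Q a b) = (\<Sum>c\<in>UNIV. P a c) * (\<Sum>d\<in>UNIV. Q a d)" for a
    using mat_vec_par_mat[of P Q "\<lambda>_. 1" a] by (simp add: mat_vec_def sum_product)
  then show "stochastic (par_mat P Q)"
    using assms
    by (auto simp: strict_kernel_def stochastic_def par_mat_def intro!: sum_nonneg)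
  have "par_mat P Q {} {} = mat_vec (par_mat P Q) (\<lambda>b. if b = {} then 1 else 0) {}"
    by (simp add: mat_vec_def if_distrib[where f="\<lambda>x. _ * x"] cong: if_cong)
  also have "\<dots> = 1"
    unfolding mat_vec_par_mat strict_kernel.kernel_empty_row[OF assms(1)]
      strict_kernel.kernel_empty_row[OF assms(2)]
    by (subst sum.swap) (simp add: mat_id_def if_distrib[where f="\<lambda>x. x * _"] cong: if_cong)
  finally show "par_mat P Q {} {} = 1" .
qed

lemma strict_kernel_mat_mult:
  assumes "strict_kernel P" "strict_kernel Q"
  shows "strict_kernel (mat_mult P Q)"
proof
  show "stochastic (mat_mult P Q)"
    using assms by (simp add: strict_kernel_def stochastic_mat_mult)
  show "mat_mult P Q {} {} = 1"
    using assms by (simp add: mat_mult_def strict_kernel.kernel_empty_row[OF assms(1)] mat_id_def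
        strict_kernel_def if_distrib[where f="\<lambda>x. x * _"] cong: if_cong)
qed

lemma strict_kernel_convex:
  assumes "strict_kernel P" "strict_kernel Q" "0 \<le> r" "r \<le> 1"
  shows "strict_kernel (\<lambda>a b. r * P a b + (1 - r) * Q a b)"
  using assms
  by (auto simp: strict_kernel_def stochastic_def sum.distrib simp flip: sum_distrib_left)

lemma strict_kernel_bsem: "wf_prog p \<Longrightarrow> strict_kernel (bsem p)"
proof (induction p)
  case (Pred t)
  then show ?case
    using strict_kernel_deterministic[of "\<lambda>a. {\<pi> \<in> a. eval_pred t \<pi>}"] by (simp add: fun_eq_iff)
next
  case (Assign f n)
  then show ?case
    using strict_kernel_deterministic[of "\<lambda>a. (\<lambda>\<pi>. \<pi>(f := n)) ` a"] by (simp add: fun_eq_iff)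
next
  case (Par p q)
  then show ?case
    using strict_kernel_par_mat[of "bsem p" "bsem q"] by (simp add: fun_eq_iff)
next
  case (Seq p q)
  then show ?case
    using strict_kernel_mat_mult[of "bsem p" "bsem q"] by (simp add: fun_eq_iff)
next
  case (Choice p r q)
  then show ?case
    using strict_kernel_convex[of "bsem p" "bsem q" "real_of_rat r"] by (simp add: fun_eq_iff)
next
  case (Star p)
  then interpret strict_kernel "bsem p"
    by simp
  show ?case
    using strict_kernel_star by (simp add: fun_eq_iff lim_star_approx)
qed

lemma bsem_Rats: "wf_prog p \<Longrightarrow> bsem p a b \<in> \<rat>"
proof (induction p arbitrary: a b)
  case (Star p)
  then interpret strict_kernel "bsem p"
    using strict_kernel_bsem by simp
  show ?case
    using Star by (simp add: lim_star_approx mat_lim_Rats SU_Rats)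
qed (auto simp: par_mat_def mat_mult_def intro!: Rats_sum Rats_mult Rats_add Rats_diff)

theorem theorem4p7:
  fixes p :: "('f::finite, 'v::finite) prog"
  assumes "wf_prog p"
  defines "S \<equiv> small_step (bsem p)"
  defines "SU \<equiv> mat_mult S (U_mat S)"
  shows "\<exists>Sinf.
     (\<forall>s t. (\<lambda>n. mat_pow SU n s t) \<longlonglongrightarrow> Sinf s t)
   \<and> (\<forall>a b b'. (\<lambda>n. \<Sum>a'\<in>UNIV. mat_pow S n (a, b) (a', b')) \<longlonglongrightarrow> Sinf (a, b) ({}, b'))
   \<and> (\<forall>s t. absorbing_st s \<longrightarrow> Sinf s t = (if s = t then 1 else 0))
   \<and> (\<forall>s t. \<not> absorbing_st t \<longrightarrow> Sinf s t = 0)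
   \<and> (\<exists>N. (\<forall>s t. \<not> absorbing_st s \<longrightarrow> \<not> absorbing_st t \<longrightarrow>
              (\<Sum>u\<in>{u. \<not> absorbing_st u}. N s u * (mat_id u t - SU u t)) = mat_id s t
            \<and> (\<Sum>u\<in>{u. \<not> absorbing_st u}. (mat_id s u - SU s u) * N u t) = mat_id s t)
          \<and> (\<forall>s t. \<not> absorbing_st s \<longrightarrow> absorbing_st t \<longrightarrow>
              Sinf s t = (\<Sum>u\<in>{u. \<not> absorbing_st u}. N s u * SU u t)))
   \<and> (\<forall>s t. Sinf s t \<in> \<rat>)"
proof -
  interpret strict_kernel "bsem p"
    using strict_kernel_bsem[OF assms(1)] .
  have transient_states: "{u. \<not> absorbing_st u} = - {u. absorbing_st u}"
    by blast
  show ?thesis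
    unfolding S_def SU_def transient_states
    by (rule exI[of _ "mat_lim (strict_kernel.SU (bsem p))"],
        intro conjI exI[of _ fundamental] allI impI)
      (simp_all add: mat_pow_tendsto marginal_tendsto mat_lim_absorbing[unfolded mat_id_def]
        mat_lim_transient fundamental_left_inverse fundamental_right_inverse
        mat_lim_eq_fundamental mat_lim_Rats[OF SU_Rats[OF bsem_Rats[OF assms(1)]]])
qed

end
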